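(* Let $A\in\mathbb{R}^{m\times n}$, $G:\mathbb{R}^k\to\mathbb{R}^n$, $\epsilon_{\max}\ge0$, let $l$ be a positive integer and $C_0,C_1,\delta,t\ge0$. (i) (Sufficiency.) Suppose that for all $\eta\in T_A(2\epsilon_{\max})$, $$\|\eta\|_2\le\frac{C_0}{2}l^{-t}\sigma_{2l,G'}(\eta)+C_1\epsilon_{\max}+\delta.$$ Then the decoder $\Delta(y)=\arg\min_{x:\|Ax-y\|_2\le\epsilon_{\max}}\sigma_{l,G}(x)$ satisfies, for all $x\in\mathbb{R}^n$ and all $\epsilon$ with $\|\epsilon\|_2\le\epsilon_{\max}$, $$\|x-\Delta(Ax+\epsilon)\|_2\le C_0l^{-t}\sigma_{l,G}(x)+C_1\epsilon_{\max}+\delta.$$ (ii) (Necessity.) Conversely, if some decoder $\Delta:\mathbb{R}^m\to\mathbb{R}^n$ satisfies $\|x-\Delta(Ax+\epsilon)\|_2\le C_0l^{-t}\sigma_{l,G}(x)+C_1\epsilon_{\max}+\delta$ for all $x\in\mathbb{R}^n$ and all $\|\epsilon\|_2\le\epsilon_{\max}$, then for all $\eta\in T_A(\epsilon_{\max})$, $$\|\eta\|_2\le C_0l^{-t}\sigma_{2l,G'}(\eta)+2C_1\epsilon_{\max}+2\delta.$$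
   Context: For $v\in\mathbb{R}^n$ and $s\ge0$, $S_s(v)=\{x\in\mathbb{R}^n:\|x-v\|_0\le s\}$ ($\|\cdot\|_0$ counts nonzero coordinates), and $S_s=S_s(0)$. For a function $H$ with domain $D$, $S_{s,H}=\bigcup_{w\in D}S_s(H(w))$ and $\sigma_{s,H}(x)=\inf_{\hat x\in S_{s,H}}\|x-\hat x\|_1$. The difference function $G':\mathbb{R}^k\times\mathbb{R}^k\to\mathbb{R}^n$ is $G'(z_1,z_2)=G(z_1)-G(z_2)$, so $S_{s,G'}=\{G(z_1)-G(z_2)+\nu: z_1,z_2\in\mathbb{R}^k,\ \nu\in S_s\}$. The $\epsilon$-tube of $A$ is $T_A(\epsilon)=\{w\in\mathbb{R}^n:\|Aw\|_2\le\epsilon\}$. *)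

theory Defs
  imports "HOL-Analysis.Analysis"
begin

definition l0norm :: "real^'n \<Rightarrow> nat" where
  "l0norm x = card {i. x $ i \<noteq> 0}"

definition l1norm :: "real^'n \<Rightarrow> real" where
  "l1norm x = (\<Sum>i\<in>UNIV. \<bar>x $ i\<bar>)"

definition sparse_around :: "nat \<Rightarrow> real^'n \<Rightarrow> (real^'n) set" where
  "sparse_around s v = {x. l0norm (x - v) \<le> s}"

definition sparse_model :: "nat \<Rightarrow> ('d \<Rightarrow> real^'n) \<Rightarrow> (real^'n) set" where
  "sparse_model s H = (\<Union>w. sparse_around s (H w))"

definition sigma :: "nat \<Rightarrow> ('d \<Rightarrow> real^'n) \<Rightarrow> real^'n \<Rightarrow> real" where
  "sigma s H x = Inf {l1norm (x - xh) | xh. xh \<in> sparse_model s H}"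

definition Gdiff :: "('k \<Rightarrow> real^'n) \<Rightarrow> ('k \<times> 'k) \<Rightarrow> real^'n" where
  "Gdiff G = (\<lambda>(z1, z2). G z1 - G z2)"

definition tube :: "real^'n^'m \<Rightarrow> real \<Rightarrow> (real^'n) set" where
  "tube A e = {w. norm (A *v w) \<le> e}"

end

theory Submission
  imports Defs
begin

text \<open>
  Since \<open>S\<^sub>2\<^sub>l\<^sub>,\<^sub>G\<^sub>'\<close> consists exactly of the differences of two points of \<open>S\<^sub>l\<^sub>,\<^sub>G\<close>, one has
  \<open>\<sigma>\<^sub>2\<^sub>l\<^sub>,\<^sub>G\<^sub>'(x - x') \<le> \<sigma>\<^sub>l\<^sub>,\<^sub>G(x) + \<sigma>\<^sub>l\<^sub>,\<^sub>G(x')\<close>.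
  Sufficiency: the decoded point \<open>\<Delta>(y)\<close> and \<open>x\<close> are both feasible, so their difference lies in
  the \<open>2\<epsilon>\<^sub>m\<^sub>a\<^sub>x\<close>-tube, and minimality gives \<open>\<sigma>\<^sub>l\<^sub>,\<^sub>G(\<Delta>(y)) \<le> \<sigma>\<^sub>l\<^sub>,\<^sub>G(x)\<close>.
  Necessity: given \<open>\<eta>\<close> in the tube and \<open>u - v\<close> in \<open>S\<^sub>2\<^sub>l\<^sub>,\<^sub>G\<^sub>'\<close>, write \<open>\<eta> = x\<^sub>1 - v\<close> with
  \<open>x\<^sub>1 = u + (\<eta> - (u - v))\<close>; the measurements \<open>Ax\<^sub>1\<close> and \<open>Av + A\<eta>\<close> coincide, so the decoder
  must return one point close to both \<open>x\<^sub>1\<close> and \<open>v\<close>.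
\<close>

lemma l1norm_nonneg: "l1norm x \<ge> 0"
  unfolding l1norm_def by (simp add: sum_nonneg)

lemma l1norm_triangle: "l1norm (x + y) \<le> l1norm x + l1norm y"
  unfolding l1norm_def by (simp add: sum.distrib[symmetric] sum_mono abs_triangle_ineq)

lemma l1norm_minus_commute: "l1norm (x - y) = l1norm (y - x)"
  unfolding l1norm_def by (simp add: abs_minus_commute)

lemma l1norm_zero [simp]: "l1norm 0 = 0"
  unfolding l1norm_def by simp

lemma l0norm_uminus: "l0norm (- x) = l0norm x"
  unfolding l0norm_def by simp

lemma l0norm_add_le: "l0norm (x + y) \<le> l0norm x + l0norm y"
proof -
  have "card {i. (x + y) $ i \<noteq> 0} \<le> card ({i. x $ i \<noteq> 0} \<union> {i. y $ i \<noteq> 0})"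
    by (intro card_mono) auto
  also have "\<dots> \<le> card {i. x $ i \<noteq> 0} + card {i. y $ i \<noteq> 0}"
    by (rule card_Un_le)
  finally show ?thesis
    unfolding l0norm_def .
qed

lemma l0norm_split:
  assumes "l0norm x \<le> s + r"
  obtains x1 x2 where "x = x1 + x2" "l0norm x1 \<le> s" "l0norm x2 \<le> r"
proof -
  define S where "S = {i. x $ i \<noteq> 0}"
  obtain T where T: "T \<subseteq> S" "card T = min s (card S)"
    using obtain_subset_with_card_n[of "min s (card S)" S] by auto
  define x1 where "x1 = (\<chi> i. if i \<in> T then x $ i else 0)"
  define x2 where "x2 = (\<chi> i. if i \<in> T then 0 else x $ i)"
  have "l0norm x1 \<le> card T"
    unfolding l0norm_def x1_def by (intro card_mono) auto
  moreover have "l0norm x2 \<le> card (S - T)"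
    unfolding l0norm_def x2_def S_def by (intro card_mono) auto
  moreover have "card (S - T) = card S - card T"
    using T by (simp add: card_Diff_subset finite_subset)
  ultimately have "l0norm x1 \<le> s" "l0norm x2 \<le> r"
    using T assms unfolding l0norm_def S_def by linarith+
  moreover have "x = x1 + x2"
    unfolding x1_def x2_def by (simp add: vec_eq_iff)
  ultimately show ?thesis
    using that by blast
qed

lemma mem_sparse_model_iff: "x \<in> sparse_model s H \<longleftrightarrow> (\<exists>w. l0norm (x - H w) \<le> s)"
  unfolding sparse_model_def sparse_around_def by blast

lemma value_mem_sparse_model: "H w \<in> sparse_model s H"
  unfolding mem_sparse_model_iff by (auto simp: l0norm_def intro!: exI[of _ w])

lemma diff_mem_sparse_model_Gdiff:
  assumes "u \<in> sparse_model l G" "v \<in> sparse_model l G"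
  shows "u - v \<in> sparse_model (2 * l) (Gdiff G)"
proof -
  obtain w1 w2 where w: "l0norm (u - G w1) \<le> l" "l0norm (v - G w2) \<le> l"
    using assms unfolding mem_sparse_model_iff by blast
  have "l0norm (u - v - Gdiff G (w1, w2)) = l0norm ((u - G w1) + - (v - G w2))"
    by (rule arg_cong[of _ _ l0norm]) (simp add: Gdiff_def algebra_simps)
  also have "\<dots> \<le> l0norm (u - G w1) + l0norm (v - G w2)"
    using l0norm_add_le[of "u - G w1" "- (v - G w2)"] by (simp only: l0norm_uminus)
  also have "\<dots> \<le> 2 * l"
    using w by linarith
  finally show ?thesis
    unfolding mem_sparse_model_iff by blast
qed

lemma sparse_model_Gdiff_obtain_diff:
  assumes "w \<in> sparse_model (2 * l) (Gdiff G)"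
  obtains u v where "u \<in> sparse_model l G" "v \<in> sparse_model l G" "w = u - v"
proof -
  obtain z1 z2 where "l0norm (w - (G z1 - G z2)) \<le> l + l"
    using assms unfolding mem_sparse_model_iff Gdiff_def by (auto simp: mult_2)
  then obtain \<nu>1 \<nu>2 where \<nu>: "w - (G z1 - G z2) = \<nu>1 + \<nu>2" "l0norm \<nu>1 \<le> l" "l0norm \<nu>2 \<le> l"
    by (rule l0norm_split)
  have "G z1 + \<nu>1 \<in> sparse_model l G"
    using \<nu>(2) unfolding mem_sparse_model_iff by (auto intro!: exI[of _ z1])
  moreover have "G z2 - \<nu>2 \<in> sparse_model l G"
    using \<nu>(3) unfolding mem_sparse_model_iff by (auto simp: l0norm_uminus intro!: exI[of _ z2])
  moreover have "w = (G z1 + \<nu>1) - (G z2 - \<nu>2)"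
    using \<nu>(1) by (simp add: algebra_simps)
  ultimately show ?thesis
    using that by blast
qed

lemma sigma_le_l1norm_diff: "xh \<in> sparse_model s H \<Longrightarrow> sigma s H x \<le> l1norm (x - xh)"
  unfolding sigma_def by (rule cInf_lower) (auto intro: bdd_belowI[of _ 0] simp: l1norm_nonneg)

lemma le_sigma: "(\<And>xh. xh \<in> sparse_model s H \<Longrightarrow> a \<le> l1norm (x - xh)) \<Longrightarrow> a \<le> sigma s H x"
  unfolding sigma_def by (rule cInf_greatest) (auto intro: value_mem_sparse_model)

lemma sigma_nonneg: "sigma s H x \<ge> 0"
  by (rule le_sigma) (simp add: l1norm_nonneg)

lemma sigma_eq_0: "x \<in> sparse_model s H \<Longrightarrow> sigma s H x = 0"
  using sigma_le_l1norm_diff[of x s H x] sigma_nonneg[of s H x] by simp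

lemma le_mult_sigma:
  assumes "c \<ge> 0" and "\<And>xh. xh \<in> sparse_model s H \<Longrightarrow> a \<le> c * l1norm (x - xh)"
  shows "a \<le> c * sigma s H x"
proof (cases "c = 0")
  case True
  then show ?thesis
    using assms(2)[OF value_mem_sparse_model] by simp
next
  case False
  with assms have "a / c \<le> sigma s H x"
    by (intro le_sigma) (simp add: divide_le_eq mult.commute)
  with False assms(1) show ?thesis
    by (simp add: divide_le_eq mult.commute)
qed

lemma sigma_Gdiff_diff_le: "sigma (2 * l) (Gdiff G) (x - x') \<le> sigma l G x + sigma l G x'"
proof -
  have "sigma (2 * l) (Gdiff G) (x - x') \<le> l1norm (x - u) + l1norm (x' - v)"
    if "u \<in> sparse_model l G" "v \<in> sparse_model l G" for u v
  proof -
    have "sigma (2 * l) (Gdiff G) (x - x') \<le> l1norm (x - x' - (u - v))"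
      by (rule sigma_le_l1norm_diff[OF diff_mem_sparse_model_Gdiff[OF that]])
    also have "x - x' - (u - v) = (x - u) + (v - x')"
      by (simp add: algebra_simps)
    also have "l1norm \<dots> \<le> l1norm (x - u) + l1norm (v - x')"
      by (rule l1norm_triangle)
    finally show ?thesis
      by (simp add: l1norm_minus_commute[of v x'])
  qed
  then have "sigma (2 * l) (Gdiff G) (x - x') - l1norm (x' - v) \<le> sigma l G x"
    if "v \<in> sparse_model l G" for v
    using that by (intro le_sigma) force
  then have "sigma (2 * l) (Gdiff G) (x - x') - sigma l G x \<le> sigma l G x'"
    by (intro le_sigma) force
  then show ?thesis
    by simp
qed

lemma diff_mem_tube:
  assumes "norm (A *v u - y) \<le> e" "norm (A *v v - y) \<le> e"
  shows "u - v \<in> tube A (2 * e)"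
proof -
  have "A *v (u - v) = (A *v u - y) - (A *v v - y)"
    by (simp add: matrix_vector_mult_diff_distrib)
  then show ?thesis
    using norm_triangle_ineq4[of "A *v u - y" "A *v v - y"] assms unfolding tube_def by simp
qed

lemma decoder_error_le_if_tube_bound:
  assumes "K \<ge> 0"
    and tube_bound: "\<forall>\<eta> \<in> tube A (2 * e). norm \<eta> \<le> K / 2 * sigma (2 * l) (Gdiff G) \<eta> + B"
    and decoder: "\<forall>y. (\<exists>z. norm (A *v z - y) \<le> e) \<longrightarrow>
                       is_arg_min (sigma l G) (\<lambda>z. norm (A *v z - y) \<le> e) (\<Delta> y)"
    and "norm \<epsilon> \<le> e"
  shows "norm (x - \<Delta> (A *v x + \<epsilon>)) \<le> K * sigma l G x + B"
proof -
  define y where "y = A *v x + \<epsilon>"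
  have x_feasible: "norm (A *v x - y) \<le> e"
    using \<open>norm \<epsilon> \<le> e\<close> by (simp add: y_def)
  then have "is_arg_min (sigma l G) (\<lambda>z. norm (A *v z - y) \<le> e) (\<Delta> y)"
    using decoder by blast
  then have \<Delta>_feasible: "norm (A *v \<Delta> y - y) \<le> e" and "sigma l G (\<Delta> y) \<le> sigma l G x"
    using x_feasible unfolding is_arg_min_def by (auto simp: not_less)
  then have "sigma (2 * l) (Gdiff G) (x - \<Delta> y) \<le> 2 * sigma l G x"
    using sigma_Gdiff_diff_le[of l G x "\<Delta> y"] by simp
  moreover have "norm (x - \<Delta> y) \<le> K / 2 * sigma (2 * l) (Gdiff G) (x - \<Delta> y) + B"
    using tube_bound diff_mem_tube[OF x_feasible \<Delta>_feasible] by blast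
  ultimately show ?thesis
    using mult_left_mono[of _ _ "K / 2"] \<open>K \<ge> 0\<close> unfolding y_def by fastforce
qed

lemma tube_bound_if_decoder_error_le:
  assumes "K \<ge> 0"
    and decoder: "\<forall>x \<epsilon>. norm \<epsilon> \<le> e \<longrightarrow> norm (x - \<Delta> (A *v x + \<epsilon>)) \<le> K * sigma l G x + B"
    and "\<eta> \<in> tube A e"
  shows "norm \<eta> \<le> K * sigma (2 * l) (Gdiff G) \<eta> + 2 * B"
proof -
  have "norm \<eta> - 2 * B \<le> K * sigma (2 * l) (Gdiff G) \<eta>"
  proof (rule le_mult_sigma[OF \<open>K \<ge> 0\<close>])
    fix w assume "w \<in> sparse_model (2 * l) (Gdiff G)"
    then obtain u v where u: "u \<in> sparse_model l G" and v: "v \<in> sparse_model l G" and "w = u - v"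
      by (rule sparse_model_Gdiff_obtain_diff)
    define x1 where "x1 = u + (\<eta> - w)"
    have \<eta>_eq: "\<eta> = x1 - v"
      unfolding x1_def \<open>w = u - v\<close> by simp
    have "norm (A *v \<eta>) \<le> e"
      using \<open>\<eta> \<in> tube A e\<close> unfolding tube_def by simp
    then have "norm (x1 - \<Delta> (A *v x1)) \<le> K * sigma l G x1 + B"
      and "norm (v - \<Delta> (A *v v + A *v \<eta>)) \<le> K * sigma l G v + B"
      using decoder[rule_format, of 0 x1] decoder[rule_format, of "A *v \<eta>" v] norm_ge_zero[of "A *v \<eta>"]
      by simp_all
    moreover have "A *v v + A *v \<eta> = A *v x1"
      by (simp add: \<eta>_eq matrix_vector_mult_diff_distrib)
    moreover have "K * sigma l G x1 \<le> K * l1norm (\<eta> - w)"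
      using sigma_le_l1norm_diff[OF u, of x1] \<open>K \<ge> 0\<close> by (simp add: x1_def mult_left_mono)
    moreover have "norm \<eta> \<le> norm (x1 - \<Delta> (A *v x1)) + norm (v - \<Delta> (A *v x1))"
      unfolding \<eta>_eq using norm_triangle_ineq4[of "x1 - \<Delta> (A *v x1)" "v - \<Delta> (A *v x1)"] by simp
    ultimately show "norm \<eta> - 2 * B \<le> K * l1norm (\<eta> - w)"
      using sigma_eq_0[OF v] by simp
  qed
  then show ?thesis
    by simp
qed

theorem lemma3:
  fixes A :: "real^'n^'m" and G :: "real^'k \<Rightarrow> real^'n"
    and emax C0 C1 \<delta> t :: real and l :: nat
  assumes "emax \<ge> 0" and "l > 0" and "C0 \<ge> 0" and "C1 \<ge> 0" and "\<delta> \<ge> 0" and "t \<ge> 0"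
  shows
   "(\<forall>\<Delta> :: real^'m \<Rightarrow> real^'n.
      ((\<forall>\<eta> \<in> tube A (2 * emax).
          norm \<eta> \<le> C0 / 2 * real l powr (- t) * sigma (2 * l) (Gdiff G) \<eta> + C1 * emax + \<delta>)
       \<and> (\<forall>y. (\<exists>z. norm (A *v z - y) \<le> emax) \<longrightarrow>
              is_arg_min (sigma l G) (\<lambda>z. norm (A *v z - y) \<le> emax) (\<Delta> y)))
      \<longrightarrow> (\<forall>x \<epsilon>. norm \<epsilon> \<le> emax \<longrightarrow>
             norm (x - \<Delta> (A *v x + \<epsilon>)) \<le> C0 * real l powr (- t) * sigma l G x + C1 * emax + \<delta>))
    \<and>
    (\<forall>\<Delta> :: real^'m \<Rightarrow> real^'n.
      (\<forall>x \<epsilon>. norm \<epsilon> \<le> emax \<longrightarrow>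
             norm (x - \<Delta> (A *v x + \<epsilon>)) \<le> C0 * real l powr (- t) * sigma l G x + C1 * emax + \<delta>)
      \<longrightarrow> (\<forall>\<eta> \<in> tube A emax.
            norm \<eta> \<le> C0 * real l powr (- t) * sigma (2 * l) (Gdiff G) \<eta> + 2 * C1 * emax + 2 * \<delta>))"
proof (intro conjI allI impI ballI)
  define K where "K = C0 * real l powr (- t)"
  have K: "K \<ge> 0"
    using \<open>C0 \<ge> 0\<close> by (simp add: K_def)
  fix \<Delta> :: "real^'m \<Rightarrow> real^'n"
  {
    fix x :: "real^'n" and \<epsilon> :: "real^'m"
    assume "(\<forall>\<eta> \<in> tube A (2 * emax).
              norm \<eta> \<le> C0 / 2 * real l powr (- t) * sigma (2 * l) (Gdiff G) \<eta> + C1 * emax + \<delta>)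
           \<and> (\<forall>y. (\<exists>z. norm (A *v z - y) \<le> emax) \<longrightarrow>
              is_arg_min (sigma l G) (\<lambda>z. norm (A *v z - y) \<le> emax) (\<Delta> y))"
      and "norm \<epsilon> \<le> emax"
    then show "norm (x - \<Delta> (A *v x + \<epsilon>)) \<le> C0 * real l powr (- t) * sigma l G x + C1 * emax + \<delta>"
      using decoder_error_le_if_tube_bound[OF K, of A emax l G "C1 * emax + \<delta>" \<Delta> \<epsilon> x]
      unfolding K_def by (simp add: add.assoc)
  next
    fix \<eta> :: "real^'n"
    assume "\<forall>x \<epsilon>. norm \<epsilon> \<le> emax \<longrightarrow>
              norm (x - \<Delta> (A *v x + \<epsilon>)) \<le> C0 * real l powr (- t) * sigma l G x + C1 * emax + \<delta>"
      and "\<eta> \<in> tube A emax"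
    then show "norm \<eta> \<le> C0 * real l powr (- t) * sigma (2 * l) (Gdiff G) \<eta> + 2 * C1 * emax + 2 * \<delta>"
      using tube_bound_if_decoder_error_le[OF K, of emax \<Delta> A l G "C1 * emax + \<delta>" \<eta>]
      unfolding K_def by (simp add: add.assoc algebra_simps)
  }
qed

end
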